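(* Let $\varphi:X\to\mathbb R$ be Lipschitz continuous and let $u$ be a calibrated subaction of $\varphi$. If $\underline{x},\underline{z}\in\Omega_\varphi$ satisfy $H_\varphi(\underline{x},\underline{z})+H_\varphi(\underline{z},\underline{x})=0$, then \[H_\varphi(\underline{x},\underline{y})+u(\underline{x})=H_\varphi(\underline{z},\underline{y})+u(\underline{z})\quad\text{for every }\underline{y}\in X.\]
   Context: $X=[0,1]^{\mathbb N_0}$ with metric $d_X(\underline{x},\underline{y})=\sum_{i\ge0}|x_i-y_i|/2^{i+1}$ and shift $\sigma(\underline{x})_i=x_{i+1}$. $\alpha_\varphi=\inf_\mu\int\varphi\,d\mu$ over $\sigma$-invariant Borel probability measures. $B(\underline{x},\underline{y},n;\varepsilon)=\{\underline{z}: d_X(\underline{x},\underline{z})<\varepsilon,\ d_X(\sigma^n\underline{z},\underline{y})<\varepsilon\}$. Mañé potential $S_\varphi(\underline{x},\underline{y})=\lim_{\varepsilon\to0}\inf\{\sum_{i=0}^{n-1}(\varphi(\sigma^i\underline{z})-\alpha_\varphi): n\in\mathbb N,\ \underline{z}\in B(\underline{x},\underline{y},n;\varepsilon)\}$; Peierls barrier $H_\varphi(\underline{x},\underline{y})=\lim_{\varepsilon\to0}\liminf_{n\to\infty}\inf\{\sum_{i=0}^{n-1}(\varphi(\sigma^i\underline{z})-\alpha_\varphi): \underline{z}\in B(\underline{x},\underline{y},n;\varepsilon)\}\in\mathbb R\cup\{+\infty\}$; Aubry set $\Omega_\varphi=\{\underline{x}: S_\varphi(\underline{x},\underline{x})=0\}$.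 A subaction is a continuous $u$ with $u(\underline{x})+\varphi(\underline{x})\ge u(\sigma\underline{x})+\alpha_\varphi$ for all $\underline{x}$; it is calibrated if $\min_{\sigma(\underline{y})=\underline{x}}(\varphi(\underline{y})+u(\underline{y}))=u(\underline{x})+\alpha_\varphi$ for every $\underline{x}$. *)

theory Defs
  imports "HOL-Probability.Probability"
begin

definition Xsp :: "(nat \<Rightarrow> real) set" where
  "Xsp = {x. \<forall>i. 0 \<le> x i \<and> x i \<le> 1}"

definition dX :: "(nat \<Rightarrow> real) \<Rightarrow> (nat \<Rightarrow> real) \<Rightarrow> real" where
  "dX x y = (\<Sum>i. \<bar>x i - y i\<bar> / 2 ^ (i + 1))"

definition shift :: "(nat \<Rightarrow> real) \<Rightarrow> (nat \<Rightarrow> real)" where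
  "shift x = (\<lambda>i. x (Suc i))"

definition lipschitz_X :: "((nat \<Rightarrow> real) \<Rightarrow> real) \<Rightarrow> bool" where
  "lipschitz_X f \<longleftrightarrow> (\<exists>L. \<forall>x\<in>Xsp. \<forall>y\<in>Xsp. \<bar>f x - f y\<bar> \<le> L * dX x y)"

definition continuous_X :: "((nat \<Rightarrow> real) \<Rightarrow> real) \<Rightarrow> bool" where
  "continuous_X f \<longleftrightarrow> (\<forall>x\<in>Xsp. \<forall>e>0. \<exists>\<delta>>0. \<forall>y\<in>Xsp. dX x y < \<delta> \<longrightarrow> \<bar>f y - f x\<bar> < e)"

text \<open>Shift-invariant Borel probability measures on X (Borel sets of X, whose
  dX-topology coincides with the subspace product topology).\<close>
definition invariant_measures :: "(nat \<Rightarrow> real) measure set" where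
  "invariant_measures = {M. space M = Xsp \<and> sets M = sets (restrict_space borel Xsp)
      \<and> prob_space M \<and> shift \<in> measurable M M \<and> distr M M shift = M}"

definition alpha :: "((nat \<Rightarrow> real) \<Rightarrow> real) \<Rightarrow> real" where
  "alpha \<phi> = (INF M\<in>invariant_measures. integral\<^sup>L M \<phi>)"

definition Bset :: "(nat \<Rightarrow> real) \<Rightarrow> (nat \<Rightarrow> real) \<Rightarrow> nat \<Rightarrow> real \<Rightarrow> (nat \<Rightarrow> real) set" where
  "Bset x y n \<epsilon> = {z\<in>Xsp. dX x z < \<epsilon> \<and> dX ((shift ^^ n) z) y < \<epsilon>}"

definition birk :: "((nat \<Rightarrow> real) \<Rightarrow> real) \<Rightarrow> nat \<Rightarrow> (nat \<Rightarrow> real) \<Rightarrow> real" where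
  "birk \<phi> n z = (\<Sum>i<n. \<phi> ((shift ^^ i) z) - alpha \<phi>)"

definition mane :: "((nat \<Rightarrow> real) \<Rightarrow> real) \<Rightarrow> (nat \<Rightarrow> real) \<Rightarrow> (nat \<Rightarrow> real) \<Rightarrow> ereal" where
  "mane \<phi> x y = Lim (at_right (0::real))
     (\<lambda>\<epsilon>. INF p\<in>{(n, z). n \<ge> 1 \<and> z \<in> Bset x y n \<epsilon>}. ereal (birk \<phi> (fst p) (snd p)))"

definition peierls :: "((nat \<Rightarrow> real) \<Rightarrow> real) \<Rightarrow> (nat \<Rightarrow> real) \<Rightarrow> (nat \<Rightarrow> real) \<Rightarrow> ereal" where
  "peierls \<phi> x y = Lim (at_right (0::real))
     (\<lambda>\<epsilon>. liminf (\<lambda>n. INF z\<in>Bset x y n \<epsilon>. ereal (birk \<phi> n z)))"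

definition aubry :: "((nat \<Rightarrow> real) \<Rightarrow> real) \<Rightarrow> (nat \<Rightarrow> real) set" where
  "aubry \<phi> = {x\<in>Xsp. mane \<phi> x x = 0}"

definition subaction :: "((nat \<Rightarrow> real) \<Rightarrow> real) \<Rightarrow> ((nat \<Rightarrow> real) \<Rightarrow> real) \<Rightarrow> bool" where
  "subaction \<phi> u \<longleftrightarrow> continuous_X u \<and>
     (\<forall>x\<in>Xsp. u x + \<phi> x \<ge> u (shift x) + alpha \<phi>)"

definition calibrated_subaction :: "((nat \<Rightarrow> real) \<Rightarrow> real) \<Rightarrow> ((nat \<Rightarrow> real) \<Rightarrow> real) \<Rightarrow> bool" where
  "calibrated_subaction \<phi> u \<longleftrightarrow> subaction \<phi> u \<and>
     (\<forall>x\<in>Xsp. (\<exists>y\<in>Xsp. shift y = x \<and> \<phi> y + u y = u x + alpha \<phi>) \<and>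
               (\<forall>y\<in>Xsp. shift y = x \<longrightarrow> \<phi> y + u y \<ge> u x + alpha \<phi>))"

end

theory Submission
  imports Defs
begin

(* A subaction u gives the lower bound H(x,y) \<ge> u(y) - u(x). Conversely, an orbit segment
   from near x to near z and one from near z to near y can be spliced into a single point of X;
   since the first n coordinates of the spliced point agree with the first segment, its first n
   orbit points are exponentially close (in reverse order) to those of the first segment, so for
   Lipschitz \<phi> the Birkhoff sums add up to within O(\<epsilon>). This gives H(x,y) \<le> H(x,z) + H(z,y).
   If H(x,z) + H(z,x) = 0, the lower bounds force H(x,z) = u(z) - u(x) and H(z,x) = u(x) - u(z),
   and the triangle inequality applied through z and through x yields the claim.
   Of the hypotheses on x, z and u only x, z \<in> X and the subaction inequality are needed. *)

lemma funpow_shift: "(shift ^^ k) v = (\<lambda>i. v (i + k))"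
  by (induction k arbitrary: v) (auto simp: shift_def)

lemma funpow_shift_in_Xsp: "v \<in> Xsp \<Longrightarrow> (shift ^^ k) v \<in> Xsp"
  by (simp add: funpow_shift Xsp_def)

lemma summable_dX:
  assumes "x \<in> Xsp" "y \<in> Xsp"
  shows "summable (\<lambda>i. \<bar>x i - y i\<bar> / 2 ^ (i + 1))"
proof (rule summable_comparison_test)
  show "\<exists>N. \<forall>n\<ge>N. norm (\<bar>x n - y n\<bar> / 2 ^ (n + 1)) \<le> (1/2) * (1/2) ^ n"
  proof (intro exI allI impI)
    fix n :: nat
    have "0 \<le> x n" "x n \<le> 1" "0 \<le> y n" "y n \<le> 1" using assms by (auto simp: Xsp_def)
    then have "\<bar>x n - y n\<bar> \<le> 1" by linarith
    then show "norm (\<bar>x n - y n\<bar> / 2 ^ (n + 1)) \<le> (1/2) * (1/2) ^ n"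
      by (simp add: power_one_over divide_right_mono)
  qed
  show "summable (\<lambda>n. (1/2::real) * (1/2) ^ n)"
    by (intro summable_mult summable_geometric) auto
qed

lemma dX_commute: "dX x y = dX y x"
  unfolding dX_def by (simp add: abs_minus_commute)

lemma dX_nonneg: "x \<in> Xsp \<Longrightarrow> y \<in> Xsp \<Longrightarrow> 0 \<le> dX x y"
  unfolding dX_def by (intro suminf_nonneg summable_dX) auto

lemma dX_triangle:
  assumes "x \<in> Xsp" "y \<in> Xsp" "z \<in> Xsp"
  shows "dX x y \<le> dX x z + dX z y"
proof -
  have "dX x y \<le> (\<Sum>i. \<bar>x i - z i\<bar> / 2 ^ (i + 1) + \<bar>z i - y i\<bar> / 2 ^ (i + 1))"
    unfolding dX_def
  proof (rule suminf_le)
    fix i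
    show "\<bar>x i - y i\<bar> / 2 ^ (i + 1) \<le> \<bar>x i - z i\<bar> / 2 ^ (i + 1) + \<bar>z i - y i\<bar> / 2 ^ (i + 1)"
      by (simp add: add_divide_distrib[symmetric] divide_right_mono)
  qed (use assms in \<open>intro summable_add summable_dX; simp\<close>)+
  also have "\<dots> = dX x z + dX z y"
    unfolding dX_def using assms by (intro suminf_add[symmetric] summable_dX) auto
  finally show ?thesis .
qed

lemma dX_common_prefix:
  assumes "v \<in> Xsp" "v' \<in> Xsp" "\<And>i. i < k \<Longrightarrow> v i = v' i"
  shows "dX v v' = dX ((shift ^^ k) v) ((shift ^^ k) v') / 2 ^ k"
proof -
  let ?f = "\<lambda>i. \<bar>v i - v' i\<bar> / 2 ^ (i + 1)"
  have "dX v v' = (\<Sum>n. ?f (n + k)) + (\<Sum>i<k. ?f i)"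
    unfolding dX_def using assms by (intro suminf_split_initial_segment summable_dX) auto
  also have "(\<Sum>i<k. ?f i) = 0" using assms(3) by simp
  also have "(\<Sum>n. ?f (n + k)) = (\<Sum>n. \<bar>v (n + k) - v' (n + k)\<bar> / 2 ^ (n + 1) / 2 ^ k)"
    by (simp add: power_add field_simps)
  also have "\<dots> = (\<Sum>n. \<bar>v (n + k) - v' (n + k)\<bar> / 2 ^ (n + 1)) / 2 ^ k"
    using summable_dX[OF funpow_shift_in_Xsp[OF assms(1)] funpow_shift_in_Xsp[OF assms(2)], of k]
    by (intro suminf_divide) (simp add: funpow_shift)
  finally show ?thesis by (simp add: dX_def funpow_shift)
qed

lemma lipschitz_X_nonneg_constant:
  assumes "lipschitz_X \<phi>"
  obtains L where "L \<ge> 0" "\<And>a b. a \<in> Xsp \<Longrightarrow> b \<in> Xsp \<Longrightarrow> \<bar>\<phi> a - \<phi> b\<bar> \<le> L * dX a b"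
proof -
  obtain L0 where L0: "\<forall>a\<in>Xsp. \<forall>b\<in>Xsp. \<bar>\<phi> a - \<phi> b\<bar> \<le> L0 * dX a b"
    using assms unfolding lipschitz_X_def by blast
  have "\<bar>\<phi> a - \<phi> b\<bar> \<le> max L0 0 * dX a b" if "a \<in> Xsp" "b \<in> Xsp" for a b
    using L0 that mult_right_mono[OF max.cobounded1 dX_nonneg[OF that], of L0 0] by force
  then show thesis by (intro that[of "max L0 0"]) auto
qed

lemma birk_add: "birk \<phi> (n + m) w = birk \<phi> n w + birk \<phi> m ((shift ^^ n) w)"
  by (induction m) (simp_all add: birk_def funpow_shift ac_simps)

lemma birk_ge_subaction_diff:
  assumes "subaction \<phi> u" "w \<in> Xsp"
  shows "u ((shift ^^ n) w) - u w \<le> birk \<phi> n w"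
proof (induction n)
  case 0
  then show ?case by (simp add: birk_def)
next
  case (Suc n)
  have "u (shift ((shift ^^ n) w)) + alpha \<phi> \<le> u ((shift ^^ n) w) + \<phi> ((shift ^^ n) w)"
    using assms(1) funpow_shift_in_Xsp[OF assms(2), of n] unfolding subaction_def by blast
  moreover have "birk \<phi> (Suc n) w = birk \<phi> n w + (\<phi> ((shift ^^ n) w) - alpha \<phi>)"
    by (simp add: birk_def)
  ultimately show ?case using Suc by simp
qed

definition peierls_scale ::
    "((nat \<Rightarrow> real) \<Rightarrow> real) \<Rightarrow> (nat \<Rightarrow> real) \<Rightarrow> (nat \<Rightarrow> real) \<Rightarrow> real \<Rightarrow> ereal" where
  "peierls_scale \<phi> x y \<epsilon> = liminf (\<lambda>n. INF z\<in>Bset x y n \<epsilon>. ereal (birk \<phi> n z))"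

lemma Bset_mono: "\<epsilon> \<le> \<epsilon>' \<Longrightarrow> Bset x y n \<epsilon> \<subseteq> Bset x y n \<epsilon>'"
  by (auto simp: Bset_def)

lemma peierls_scale_antimono: "\<epsilon> \<le> \<epsilon>' \<Longrightarrow> peierls_scale \<phi> x y \<epsilon>' \<le> peierls_scale \<phi> x y \<epsilon>"
  unfolding peierls_scale_def
  by (intro Liminf_mono always_eventually allI INF_superset_mono Bset_mono order_refl)

lemma peierls_eq_SUP_peierls_scale:
  "peierls \<phi> x y = (SUP \<epsilon>\<in>{0<..}. peierls_scale \<phi> x y \<epsilon>)"
proof -
  let ?S = "SUP \<epsilon>\<in>{0<..}. peierls_scale \<phi> x y \<epsilon>"
  have "(peierls_scale \<phi> x y \<longlongrightarrow> ?S) (at_right 0)"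
  proof (rule increasing_tendsto)
    show "\<forall>\<^sub>F \<epsilon> in at_right 0. peierls_scale \<phi> x y \<epsilon> \<le> ?S"
      by (rule eventually_mono[OF eventually_at_right_real[of 0 1]]) (auto intro: SUP_upper)
  next
    fix c assume "c < ?S"
    then obtain \<epsilon>0 where \<epsilon>0: "\<epsilon>0 > 0" "c < peierls_scale \<phi> x y \<epsilon>0"
      by (auto simp: less_SUP_iff)
    show "\<forall>\<^sub>F \<epsilon> in at_right 0. c < peierls_scale \<phi> x y \<epsilon>"
      using eventually_at_right_real[OF \<epsilon>0(1)]
    proof eventually_elim
      case (elim \<epsilon>)
      then show ?case
        using \<epsilon>0(2) peierls_scale_antimono[of \<epsilon> \<epsilon>0] by (simp add: less_le_trans)
    qed
  qed
  then show ?thesis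
    unfolding peierls_def peierls_scale_def[symmetric] by (intro tendsto_Lim) auto
qed

lemma peierls_scale_le_peierls: "\<epsilon> > 0 \<Longrightarrow> peierls_scale \<phi> x y \<epsilon> \<le> peierls \<phi> x y"
  unfolding peierls_eq_SUP_peierls_scale by (rule SUP_upper) auto

lemma peierls_scale_less_witness:
  assumes "peierls_scale \<phi> x y \<epsilon> < ereal p"
  shows "\<exists>n\<ge>N. \<exists>w\<in>Bset x y n \<epsilon>. birk \<phi> n w < p"
proof -
  have "(INF n\<in>{N..}. (INF w\<in>Bset x y n \<epsilon>. ereal (birk \<phi> n w))) < ereal p"
    using assms unfolding peierls_scale_def liminf_SUP_INF
    by (rule le_less_trans[OF SUP_upper, rotated]) simp
  then show ?thesis by (auto simp: INF_less_iff)
qed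

lemma peierls_ge_subaction_diff:
  assumes sub: "subaction \<phi> u" and "x \<in> Xsp" "y \<in> Xsp"
  shows "ereal (u y - u x) \<le> peierls \<phi> x y"
proof (rule ereal_le_epsilon2)
  fix e :: real assume "0 < e"
  have cont: "continuous_X u" using sub by (simp add: subaction_def)
  obtain d1 where d1: "d1 > 0" "\<And>w. w \<in> Xsp \<Longrightarrow> dX x w < d1 \<Longrightarrow> \<bar>u w - u x\<bar> < e/2"
    using cont \<open>x \<in> Xsp\<close> \<open>0 < e\<close> unfolding continuous_X_def by (meson half_gt_zero)
  obtain d2 where d2: "d2 > 0" "\<And>w. w \<in> Xsp \<Longrightarrow> dX y w < d2 \<Longrightarrow> \<bar>u w - u y\<bar> < e/2"
    using cont \<open>y \<in> Xsp\<close> \<open>0 < e\<close> unfolding continuous_X_def by (meson half_gt_zero)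
  have "ereal (u y - u x - e) \<le> peierls_scale \<phi> x y (min d1 d2)"
    unfolding peierls_scale_def
  proof (intro Liminf_bounded always_eventually allI INF_greatest)
    fix n w assume "w \<in> Bset x y n (min d1 d2)"
    then have w: "w \<in> Xsp" "dX x w < d1" "dX y ((shift ^^ n) w) < d2"
      by (auto simp: Bset_def dX_commute[of y])
    have "\<bar>u w - u x\<bar> < e/2" "\<bar>u ((shift ^^ n) w) - u y\<bar> < e/2"
      using d1(2) d2(2) w funpow_shift_in_Xsp by auto
    with birk_ge_subaction_diff[OF sub w(1), of n] have "u y - u x - e \<le> birk \<phi> n w"
      unfolding abs_less_iff by linarith
    then show "ereal (u y - u x - e) \<le> ereal (birk \<phi> n w)" by simp
  qed
  also have "\<dots> \<le> peierls \<phi> x y" using d1 d2 by (intro peierls_scale_le_peierls) simp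
  finally show "ereal (u y - u x) \<le> peierls \<phi> x y + ereal e"
    by (cases "peierls \<phi> x y") auto
qed

definition splice :: "nat \<Rightarrow> (nat \<Rightarrow> real) \<Rightarrow> (nat \<Rightarrow> real) \<Rightarrow> (nat \<Rightarrow> real)" where
  "splice n a b = (\<lambda>i. if i < n then a i else b (i - n))"

lemma splice_in_Xsp: "a \<in> Xsp \<Longrightarrow> b \<in> Xsp \<Longrightarrow> splice n a b \<in> Xsp"
  by (auto simp: Xsp_def splice_def)

lemma funpow_shift_splice: "(shift ^^ n) (splice n a b) = b"
  by (simp add: funpow_shift splice_def)

lemma dX_funpow_shift_splice:
  assumes "a \<in> Xsp" "b \<in> Xsp" "i \<le> n"
  shows "dX ((shift ^^ i) (splice n a b)) ((shift ^^ i) a) = dX b ((shift ^^ n) a) / 2 ^ (n - i)"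
proof -
  have "dX ((shift ^^ i) (splice n a b)) ((shift ^^ i) a)
      = dX ((shift ^^ (n - i)) ((shift ^^ i) (splice n a b))) ((shift ^^ (n - i)) ((shift ^^ i) a))
          / 2 ^ (n - i)"
    using assms by (intro dX_common_prefix funpow_shift_in_Xsp splice_in_Xsp)
      (auto simp: funpow_shift splice_def)
  moreover have "(shift ^^ (n - i)) ((shift ^^ i) v) = (shift ^^ n) v" for v
    using assms(3) by (simp add: funpow_shift)
  ultimately show ?thesis by (simp add: funpow_shift_splice)
qed

lemma sum_inverse_powers_two_le_1: "(\<Sum>i<n. 1 / 2 ^ (n - i) :: real) \<le> 1"
proof (induction n)
  case 0
  then show ?case by simp
next
  case (Suc n)
  have "(\<Sum>i<n. 1 / 2 ^ (Suc n - i) :: real) = (\<Sum>i<n. 1 / 2 ^ (n - i) / 2)"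
    by (intro sum.cong) (auto simp: Suc_diff_le)
  then have "(\<Sum>i<Suc n. 1 / 2 ^ (Suc n - i) :: real) = (\<Sum>i<n. 1 / 2 ^ (n - i)) / 2 + 1 / 2"
    by (simp add: sum_divide_distrib)
  then show ?case using Suc by simp
qed

lemma birk_splice_le:
  assumes L: "L \<ge> 0" "\<And>a b. a \<in> Xsp \<Longrightarrow> b \<in> Xsp \<Longrightarrow> \<bar>\<phi> a - \<phi> b\<bar> \<le> L * dX a b"
    and ab: "a \<in> Xsp" "b \<in> Xsp" and \<delta>: "dX b ((shift ^^ n) a) \<le> \<delta>"
  shows "birk \<phi> (n + m) (splice n a b) \<le> birk \<phi> n a + birk \<phi> m b + L * \<delta>"
proof -
  let ?w = "splice n a b"
  have "\<phi> ((shift ^^ i) ?w) - \<phi> ((shift ^^ i) a) \<le> L * \<delta> * (1 / 2 ^ (n - i))" if "i < n" for i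
  proof -
    have "\<phi> ((shift ^^ i) ?w) - \<phi> ((shift ^^ i) a) \<le> L * dX ((shift ^^ i) ?w) ((shift ^^ i) a)"
      using ab by (intro order_trans[OF abs_ge_self L(2)] funpow_shift_in_Xsp splice_in_Xsp)
    also have "\<dots> = L * dX b ((shift ^^ n) a) * (1 / 2 ^ (n - i))"
      using that ab by (simp add: dX_funpow_shift_splice)
    also have "\<dots> \<le> L * \<delta> * (1 / 2 ^ (n - i))"
      using \<delta> L(1) by (intro mult_right_mono mult_left_mono) auto
    finally show ?thesis .
  qed
  then have "birk \<phi> n ?w - birk \<phi> n a \<le> (\<Sum>i<n. L * \<delta> * (1 / 2 ^ (n - i)))"
    unfolding birk_def sum_subtractf[symmetric] by (intro sum_mono) simp
  also have "\<dots> = L * \<delta> * (\<Sum>i<n. 1 / 2 ^ (n - i))"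
    by (simp add: sum_distrib_left)
  also have "\<dots> \<le> L * \<delta>"
    using L(1) order_trans[OF dX_nonneg[OF ab(2) funpow_shift_in_Xsp[OF ab(1)]] \<delta>]
    by (intro mult_left_le sum_inverse_powers_two_le_1) simp
  finally show ?thesis
    using birk_add[of \<phi> n m ?w] by (simp add: funpow_shift_splice)
qed

lemma splice_in_Bset:
  assumes "x \<in> Xsp" "z \<in> Xsp" "a \<in> Bset x z n \<eta>" "b \<in> Bset z y m \<eta>"
  shows "splice n a b \<in> Bset x y (n + m) (3 * \<eta>)" and "dX b ((shift ^^ n) a) < 2 * \<eta>"
proof -
  have a: "a \<in> Xsp" "dX x a < \<eta>" "dX ((shift ^^ n) a) z < \<eta>"
    and b: "b \<in> Xsp" "dX z b < \<eta>" "dX ((shift ^^ m) b) y < \<eta>"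
    using assms(3,4) by (auto simp: Bset_def)
  have "dX b ((shift ^^ n) a) \<le> dX b z + dX z ((shift ^^ n) a)"
    using a b assms(2) by (intro dX_triangle funpow_shift_in_Xsp)
  with a b show gap: "dX b ((shift ^^ n) a) < 2 * \<eta>" by (simp add: dX_commute)
  have "dX a (splice n a b) = dX b ((shift ^^ n) a) / 2 ^ n"
    using dX_funpow_shift_splice[OF a(1) b(1), where i=0] by (simp add: dX_commute)
  also have "\<dots> \<le> dX b ((shift ^^ n) a)"
    using dX_nonneg[OF b(1) funpow_shift_in_Xsp[OF a(1), of n]]
    by (simp add: divide_le_eq mult_le_cancel_left1)
  finally have "dX a (splice n a b) \<le> dX b ((shift ^^ n) a)" .
  moreover have "dX x (splice n a b) \<le> dX x a + dX a (splice n a b)"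
    using a b assms(1) by (intro dX_triangle splice_in_Xsp)
  moreover have "(shift ^^ (n + m)) (splice n a b) = (shift ^^ m) b"
    by (simp only: add.commute[of n m] funpow_add comp_apply funpow_shift_splice)
  ultimately show "splice n a b \<in> Bset x y (n + m) (3 * \<eta>)"
    using a b gap dX_nonneg[OF assms(1) a(1)] by (auto simp: Bset_def splice_in_Xsp)
qed

lemma peierls_scale_splice_le:
  assumes L: "L \<ge> 0" "\<And>a b. a \<in> Xsp \<Longrightarrow> b \<in> Xsp \<Longrightarrow> \<bar>\<phi> a - \<phi> b\<bar> \<le> L * dX a b"
    and xz: "x \<in> Xsp" "z \<in> Xsp" and \<eta>: "3 * \<eta> \<le> \<epsilon>"
    and p: "peierls_scale \<phi> x z \<eta> < ereal p" and q: "peierls_scale \<phi> z y \<eta> < ereal q"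
  shows "peierls_scale \<phi> x y \<epsilon> \<le> ereal (p + q + 2 * L * \<eta>)"
  unfolding peierls_scale_def liminf_SUP_INF
proof (rule SUP_least)
  fix N
  obtain n a where n: "n \<ge> N" "a \<in> Bset x z n \<eta>" "birk \<phi> n a < p"
    using peierls_scale_less_witness[OF p] by blast
  obtain m b where m: "b \<in> Bset z y m \<eta>" "birk \<phi> m b < q"
    using peierls_scale_less_witness[OF q] by blast
  have mem: "splice n a b \<in> Bset x y (n + m) \<epsilon>" and gap: "dX b ((shift ^^ n) a) \<le> 2 * \<eta>"
    using splice_in_Bset[OF xz n(2) m(1)] Bset_mono[OF \<eta>] by auto
  have "birk \<phi> (n + m) (splice n a b) \<le> birk \<phi> n a + birk \<phi> m b + L * (2 * \<eta>)"
    using n(2) m(1) by (intro birk_splice_le[OF L _ _ gap]) (auto simp: Bset_def)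
  with n(3) m(2) have "birk \<phi> (n + m) (splice n a b) \<le> p + q + 2 * L * \<eta>"
    by simp
  then have "(INF w\<in>Bset x y (n + m) \<epsilon>. ereal (birk \<phi> (n + m) w)) \<le> ereal (p + q + 2 * L * \<eta>)"
    by (intro INF_lower2[OF mem]) simp
  then show "(INF k\<in>{N..}. INF w\<in>Bset x y k \<epsilon>. ereal (birk \<phi> k w)) \<le> ereal (p + q + 2 * L * \<eta>)"
    by (rule INF_lower2[rotated]) (use n(1) in simp)
qed

lemma peierls_scale_le_peierls_add:
  assumes L: "L \<ge> 0" "\<And>a b. a \<in> Xsp \<Longrightarrow> b \<in> Xsp \<Longrightarrow> \<bar>\<phi> a - \<phi> b\<bar> \<le> L * dX a b"
    and xz: "x \<in> Xsp" "z \<in> Xsp" and "\<epsilon> > 0"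
    and r: "peierls \<phi> x z = ereal r" and s: "peierls \<phi> z y = ereal s"
  shows "peierls_scale \<phi> x y \<epsilon> \<le> ereal (r + s)"
proof (rule ereal_le_epsilon2)
  fix e :: real assume "0 < e"
  define \<eta> where "\<eta> = min (\<epsilon> / 3) (e / (6 * (L + 1)))"
  have \<eta>: "\<eta> > 0" "3 * \<eta> \<le> \<epsilon>"
    using \<open>\<epsilon> > 0\<close> \<open>0 < e\<close> L(1) by (auto simp: \<eta>_def)
  have "\<eta> \<le> e / (6 * (L + 1))"
    by (simp add: \<eta>_def)
  then have "\<eta> * (6 * (L + 1)) \<le> e"
    using L(1) by (simp add: le_divide_eq)
  then have error: "2 * L * \<eta> \<le> e / 3"
    using \<eta>(1) by (simp add: algebra_simps)
  have "peierls_scale \<phi> x z \<eta> < ereal (r + e / 3)"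
    using peierls_scale_le_peierls[OF \<eta>(1), of \<phi> x z] r \<open>0 < e\<close> by (auto elim: le_less_trans)
  moreover have "peierls_scale \<phi> z y \<eta> < ereal (s + e / 3)"
    using peierls_scale_le_peierls[OF \<eta>(1), of \<phi> z y] s \<open>0 < e\<close> by (auto elim: le_less_trans)
  ultimately have "peierls_scale \<phi> x y \<epsilon> \<le> ereal (r + e / 3 + (s + e / 3) + 2 * L * \<eta>)"
    using peierls_scale_splice_le[OF L xz \<eta>(2)] by blast
  also have "\<dots> \<le> ereal (r + s) + ereal e"
    using error by simp
  finally show "peierls_scale \<phi> x y \<epsilon> \<le> ereal (r + s) + ereal e" .
qed

lemma peierls_triangle:
  assumes "lipschitz_X \<phi>" "subaction \<phi> u" and xzy: "x \<in> Xsp" "z \<in> Xsp" "y \<in> Xsp"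
  shows "peierls \<phi> x y \<le> peierls \<phi> x z + peierls \<phi> z y"
proof (cases "peierls \<phi> x z = \<infinity> \<or> peierls \<phi> z y = \<infinity>")
  case True
  then show ?thesis by auto
next
  case False
  moreover have "peierls \<phi> x z \<noteq> -\<infinity>" "peierls \<phi> z y \<noteq> -\<infinity>"
    using peierls_ge_subaction_diff[OF assms(2)] xzy by (metis MInfty_neq_ereal ereal_infty_less_eq(2))+
  ultimately obtain r s where r: "peierls \<phi> x z = ereal r" and s: "peierls \<phi> z y = ereal s"
    by (meson ereal_cases)
  obtain L where L: "L \<ge> 0" "\<And>a b. a \<in> Xsp \<Longrightarrow> b \<in> Xsp \<Longrightarrow> \<bar>\<phi> a - \<phi> b\<bar> \<le> L * dX a b"
    using lipschitz_X_nonneg_constant[OF assms(1)] by blast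
  have "peierls \<phi> x y \<le> ereal (r + s)"
    unfolding peierls_eq_SUP_peierls_scale
    by (intro SUP_least peierls_scale_le_peierls_add[OF L xzy(1,2) _ r s]) auto
  then show ?thesis using r s by simp
qed

theorem theorem2p14:
  fixes \<phi> u :: "(nat \<Rightarrow> real) \<Rightarrow> real" and x z :: "nat \<Rightarrow> real"
  assumes "lipschitz_X \<phi>"
    and "calibrated_subaction \<phi> u"
    and "x \<in> aubry \<phi>" and "z \<in> aubry \<phi>"
    and "peierls \<phi> x z + peierls \<phi> z x = 0"
  shows "\<forall>y\<in>Xsp. peierls \<phi> x y + ereal (u x) = peierls \<phi> z y + ereal (u z)"
proof
  fix y assume y: "y \<in> Xsp"
  have sub: "subaction \<phi> u" using assms(2) by (simp add: calibrated_subaction_def)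
  have x: "x \<in> Xsp" and z: "z \<in> Xsp" using assms(3,4) by (auto simp: aubry_def)
  have "ereal (u z - u x) \<le> peierls \<phi> x z" "ereal (u x - u z) \<le> peierls \<phi> z x"
    using peierls_ge_subaction_diff[OF sub] x z by auto
  with assms(5) have "peierls \<phi> x z = ereal (u z - u x)" "peierls \<phi> z x = ereal (u x - u z)"
    by (cases "peierls \<phi> x z"; cases "peierls \<phi> z x"; simp)+
  then have "peierls \<phi> x y \<le> ereal (u z - u x) + peierls \<phi> z y"
    and "peierls \<phi> z y \<le> ereal (u x - u z) + peierls \<phi> x y"
    using peierls_triangle[OF assms(1) sub] x y z by metis+
  moreover have "ereal (u y - u x) \<le> peierls \<phi> x y" "ereal (u y - u z) \<le> peierls \<phi> z y"
    using peierls_ge_subaction_diff[OF sub] x y z by auto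
  ultimately show "peierls \<phi> x y + ereal (u x) = peierls \<phi> z y + ereal (u z)"
    by (cases "peierls \<phi> x y"; cases "peierls \<phi> z y") auto
qed

end
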